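(* Let $G=(V,E)$ be a graph. Assume there exists an isomorphism $f:\mathcal{A}(G)\to\mathcal{A}_{RW}(G)$ of the form $f(e_i)=\alpha_i e_{\pi(i)}$ for all $i\in V$, where $\alpha_i\neq 0$ are scalars and $\pi$ is a permutation of $V$. Then $G$ is a biregular graph or a regular graph.
   Context: Graphs are simple (no loops or multiple edges), connected, with countable (finite or infinite) vertex set $V$, and locally finite ($\deg(i)<\infty$ for all $i$, where $\deg(i)$ is the number of neighbors of $i$). The adjacency matrix is $A=(a_{ij})$ with $a_{ij}=1$ if $i,j$ are neighbors and $0$ otherwise. $G$ is regular if all vertices have the same degree. $G$ is biregular if it is bipartite with a bipartition $V=V_1\sqcup V_2$ (every edge joins $V_1$ to $V_2$) such that any two vertices on the same side have the same degree. An evolution algebra over $\mathbb{R}$ is an algebra with a countable basis $\{e_i\}$ (natural basis) such that $e_i\cdot e_j=0$ for $i\ne j$ and $e_i\cdot e_i=\sum_k c_{ik}e_k$. $\mathcal{A}(G)$ has natural basis $\{e_i:i\in V\}$ with $e_i\cdot e_i=\sum_{k\in V}a_{ik}e_k$; $\mathcal{A}_{RW}(G)$ has natural basis $\{e_i:i\in V\}$ with $e_i\cdot e_i=\sum_{k\in V}\frac{a_{ik}}{\deg(i)}e_k$; in both, $e_i\cdot e_j=0$ for $i\ne j$. An isomorphism is a bijective linear map preserving the product. *)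

theory Defs
  imports Complex_Main "HOL-Library.Countable_Set"
begin

definition graph :: "'a set \<Rightarrow> ('a \<Rightarrow> 'a \<Rightarrow> bool) \<Rightarrow> bool" where
  "graph V adj \<longleftrightarrow> countable V
     \<and> (\<forall>i j. adj i j \<longrightarrow> i \<in> V \<and> j \<in> V)
     \<and> (\<forall>i j. adj i j \<longrightarrow> adj j i)
     \<and> (\<forall>i. \<not> adj i i)
     \<and> (\<forall>i\<in>V. finite {j. adj i j})
     \<and> (\<forall>i\<in>V. \<forall>j\<in>V. adj\<^sup>*\<^sup>* i j)"

definition deg :: "('a \<Rightarrow> 'a \<Rightarrow> bool) \<Rightarrow> 'a \<Rightarrow> nat" where
  "deg adj i = card {j. adj i j}"

text \<open>Adjacency matrix entries, and the structure constants of A(G) and A_RW(G).\<close>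
definition adjm :: "('a \<Rightarrow> 'a \<Rightarrow> bool) \<Rightarrow> 'a \<Rightarrow> 'a \<Rightarrow> real" where
  "adjm adj i k = (if adj i k then 1 else 0)"

definition adjm_rw :: "('a \<Rightarrow> 'a \<Rightarrow> bool) \<Rightarrow> 'a \<Rightarrow> 'a \<Rightarrow> real" where
  "adjm_rw adj i k = adjm adj i k / real (deg adj i)"

definition regular :: "'a set \<Rightarrow> ('a \<Rightarrow> 'a \<Rightarrow> bool) \<Rightarrow> bool" where
  "regular V adj \<longleftrightarrow> (\<exists>d. \<forall>i\<in>V. deg adj i = d)"

definition biregular :: "'a set \<Rightarrow> ('a \<Rightarrow> 'a \<Rightarrow> bool) \<Rightarrow> bool" where
  "biregular V adj \<longleftrightarrow> (\<exists>V1 V2. V1 \<union> V2 = V \<and> V1 \<inter> V2 = {}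
     \<and> (\<forall>i j. adj i j \<longrightarrow> (i \<in> V1 \<and> j \<in> V2) \<or> (i \<in> V2 \<and> j \<in> V1))
     \<and> (\<forall>i\<in>V1. \<forall>j\<in>V1. deg adj i = deg adj j)
     \<and> (\<forall>i\<in>V2. \<forall>j\<in>V2. deg adj i = deg adj j))"

text \<open>Evolution algebra with natural basis indexed by V: elements are finitely
supported real functions on V (coordinates w.r.t. the natural basis).\<close>
definition vecs :: "'a set \<Rightarrow> ('a \<Rightarrow> real) set" where
  "vecs V = {x. finite {i. x i \<noteq> 0} \<and> (\<forall>i. i \<notin> V \<longrightarrow> x i = 0)}"

definition basis_vec :: "'a \<Rightarrow> 'a \<Rightarrow> real" where
  "basis_vec i = (\<lambda>k. if k = i then 1 else 0)"

text \<open>Product with e_i e_j = 0 (i /= j), e_i e_i = sum_k C i k e_k, extended bilinearly.\<close>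
definition evo_mult :: "('a \<Rightarrow> 'a \<Rightarrow> real) \<Rightarrow> ('a \<Rightarrow> real) \<Rightarrow> ('a \<Rightarrow> real) \<Rightarrow> ('a \<Rightarrow> real)" where
  "evo_mult C x y = (\<lambda>k. \<Sum>i\<in>{i. x i \<noteq> 0}. x i * y i * C i k)"

definition evo_iso :: "'a set \<Rightarrow> ('a \<Rightarrow> 'a \<Rightarrow> real) \<Rightarrow> ('a \<Rightarrow> 'a \<Rightarrow> real)
    \<Rightarrow> (('a \<Rightarrow> real) \<Rightarrow> ('a \<Rightarrow> real)) \<Rightarrow> bool" where
  "evo_iso V C D f \<longleftrightarrow> bij_betw f (vecs V) (vecs V)
     \<and> (\<forall>x\<in>vecs V. \<forall>y\<in>vecs V. f (\<lambda>k. x k + y k) = (\<lambda>k. f x k + f y k))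
     \<and> (\<forall>c. \<forall>x\<in>vecs V. f (\<lambda>k. c * x k) = (\<lambda>k. c * f x k))
     \<and> (\<forall>x\<in>vecs V. \<forall>y\<in>vecs V. f (evo_mult C x y) = evo_mult D (f x) (f y))"

end

theory Submission
  imports Defs
begin

text \<open>Comparing f(e_i e_i) with f(e_i)^2 coefficientwise shows that \<pi> is a graph
  automorphism and that \<alpha>_k deg(i) = \<alpha>_i^2 for every edge i-k. Hence all neighbours of
  a vertex carry the same \<alpha>, and so the same degree. Along any path the degrees then
  alternate between two values d1, d2: by connectedness either d1 = d2 (regular) or the
  two degree classes form the bipartition of a biregular graph.\<close>

lemma basis_vec_in_vecs: "i \<in> V \<Longrightarrow> basis_vec i \<in> vecs V"
  unfolding vecs_def basis_vec_def by simp

lemma sum_basis_vec_apply: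
  assumes "finite S"
  shows "(\<Sum>j\<in>S. c j * basis_vec j k) = (if k \<in> S then c k else 0)"
proof -
  have "(\<Sum>j\<in>S. c j * basis_vec j k) = (\<Sum>j\<in>S. if k = j then c j else 0)"
    by (rule sum.cong) (auto simp: basis_vec_def)
  then show ?thesis using assms by (simp add: sum.delta)
qed

lemma sum_basis_vec_in_vecs:
  assumes "finite S" "S \<subseteq> V"
  shows "(\<lambda>k. \<Sum>j\<in>S. c j * basis_vec j k) \<in> vecs V"
proof -
  have "{k. (\<Sum>j\<in>S. c j * basis_vec j k) \<noteq> 0} \<subseteq> S"
    using assms(1) by (auto simp: sum_basis_vec_apply split: if_splits)
  then show ?thesis
    using assms unfolding vecs_def by (auto intro: finite_subset)
qed

lemma vecs_eq_sum_basis_vec: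
  assumes "x \<in> vecs V"
  shows "x = (\<lambda>k. \<Sum>j\<in>{j. x j \<noteq> 0}. x j * basis_vec j k)"
  using assms unfolding vecs_def by (auto simp: sum_basis_vec_apply)

lemma evo_iso_add:
  "evo_iso V C D f \<Longrightarrow> x \<in> vecs V \<Longrightarrow> y \<in> vecs V \<Longrightarrow> f (\<lambda>k. x k + y k) = (\<lambda>k. f x k + f y k)"
  unfolding evo_iso_def by blast

lemma evo_iso_scale:
  "evo_iso V C D f \<Longrightarrow> x \<in> vecs V \<Longrightarrow> f (\<lambda>k. c * x k) = (\<lambda>k. c * f x k)"
  unfolding evo_iso_def by blast

lemma evo_iso_mult:
  "evo_iso V C D f \<Longrightarrow> x \<in> vecs V \<Longrightarrow> y \<in> vecs V \<Longrightarrow> f (evo_mult C x y) = evo_mult D (f x) (f y)"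
  unfolding evo_iso_def by blast

lemma evo_iso_zero:
  assumes "evo_iso V C D f"
  shows "f (\<lambda>k. 0) = (\<lambda>k. 0)"
proof -
  have "(\<lambda>k. 0) \<in> vecs V" unfolding vecs_def by simp
  then show ?thesis
    using evo_iso_scale[OF assms, of _ 0] by simp
qed

lemma evo_iso_sum_basis_vec:
  assumes iso: "evo_iso V C D f" and "finite S" "S \<subseteq> V"
  shows "f (\<lambda>k. \<Sum>j\<in>S. c j * basis_vec j k) = (\<lambda>k. \<Sum>j\<in>S. c j * f (basis_vec j) k)"
  using assms(2,3)
proof (induction S rule: finite_induct)
  case empty
  then show ?case using evo_iso_zero[OF iso] by simp
next
  case (insert a S)
  have a: "(\<lambda>k. c a * basis_vec a k) \<in> vecs V" and S: "(\<lambda>k. \<Sum>j\<in>S. c j * basis_vec j k) \<in> vecs V"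
    using insert sum_basis_vec_in_vecs[of "{a}" V c] sum_basis_vec_in_vecs[of S V c] by auto
  have "f (\<lambda>k. \<Sum>j\<in>insert a S. c j * basis_vec j k)
      = f (\<lambda>k. c a * basis_vec a k + (\<Sum>j\<in>S. c j * basis_vec j k))"
    using insert by simp
  also have "\<dots> = (\<lambda>k. f (\<lambda>k. c a * basis_vec a k) k + f (\<lambda>k. \<Sum>j\<in>S. c j * basis_vec j k) k)"
    using evo_iso_add[OF iso a S] by simp
  also have "\<dots> = (\<lambda>k. \<Sum>j\<in>insert a S. c j * f (basis_vec j) k)"
    using evo_iso_scale[OF iso basis_vec_in_vecs[of a V], where c = "c a"] insert by simp
  finally show ?case .
qed

lemma evo_iso_expand:
  assumes "evo_iso V C D f" "x \<in> vecs V"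
  shows "f x = (\<lambda>k. \<Sum>j\<in>{j. x j \<noteq> 0}. x j * f (basis_vec j) k)"
proof -
  have "finite {j. x j \<noteq> 0}" "{j. x j \<noteq> 0} \<subseteq> V"
    using assms(2) unfolding vecs_def by auto
  then have "f (\<lambda>k. \<Sum>j\<in>{j. x j \<noteq> 0}. x j * basis_vec j k)
      = (\<lambda>k. \<Sum>j\<in>{j. x j \<noteq> 0}. x j * f (basis_vec j) k)"
    by (rule evo_iso_sum_basis_vec[OF assms(1)])
  then show ?thesis
    using vecs_eq_sum_basis_vec[OF assms(2)] by simp
qed

lemma evo_mult_scaled_basis_vec_self:
  "evo_mult C (\<lambda>k. a * basis_vec i k) (\<lambda>k. a * basis_vec i k) = (\<lambda>k. a * a * C i k)"
proof (cases "a = 0")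
  case False
  then have "{j. a * basis_vec i j \<noteq> 0} = {i}" unfolding basis_vec_def by auto
  then show ?thesis unfolding evo_mult_def by (simp add: basis_vec_def)
qed (simp add: evo_mult_def)

lemma evo_iso_permuted_basis_structure_constants:
  assumes iso: "evo_iso V C D f" and inj: "inj_on \<pi> V"
    and basis: "\<forall>i\<in>V. f (basis_vec i) = (\<lambda>k. \<alpha> i * basis_vec (\<pi> i) k)"
    and i: "i \<in> V" and k: "k \<in> V" and row: "C i \<in> vecs V"
  shows "C i k * \<alpha> k = \<alpha> i * \<alpha> i * D (\<pi> i) (\<pi> k)"
proof -
  let ?S = "{j. C i j \<noteq> 0}"
  have S: "finite ?S" "?S \<subseteq> V" using row unfolding vecs_def by auto
  have "C i = evo_mult C (basis_vec i) (basis_vec i)"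
    using evo_mult_scaled_basis_vec_self[of C 1 i] by simp
  then have "f (C i) = evo_mult D (f (basis_vec i)) (f (basis_vec i))"
    using evo_iso_mult[OF iso basis_vec_in_vecs basis_vec_in_vecs, OF i i] by simp
  then have "f (C i) (\<pi> k) = \<alpha> i * \<alpha> i * D (\<pi> i) (\<pi> k)"
    using basis i evo_mult_scaled_basis_vec_self[of D "\<alpha> i" "\<pi> i"] by simp
  moreover have "f (C i) (\<pi> k) = (\<Sum>j\<in>?S. C i j * \<alpha> j * basis_vec j k)"
  proof -
    have "\<And>j. j \<in> ?S \<Longrightarrow> basis_vec (\<pi> j) (\<pi> k) = basis_vec j k"
      using inj k S(2) unfolding basis_vec_def inj_on_def by auto
    then show ?thesis
      using evo_iso_expand[OF iso row] basis S(2) by (auto intro!: sum.cong)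
  qed
  moreover have "(\<Sum>j\<in>?S. C i j * \<alpha> j * basis_vec j k) = C i k * \<alpha> k"
    using sum_basis_vec_apply[OF S(1), of "\<lambda>j. C i j * \<alpha> j" k] by simp
  ultimately show ?thesis by simp
qed

lemma graph_adjm_row_in_vecs:
  assumes "graph V adj"
  shows "adjm adj i \<in> vecs V"
proof -
  have "{k. adjm adj i k \<noteq> 0} = {k. adj i k}" unfolding adjm_def by simp
  moreover have "finite {k. adj i k}" "{k. adj i k} \<subseteq> V"
    using assms unfolding graph_def by (metis empty_Collect_eq finite.emptyI, blast)
  ultimately show ?thesis unfolding vecs_def adjm_def by auto
qed

lemma graph_deg_pos:
  assumes "graph V adj" "adj i k"
  shows "deg adj i > 0"
proof -
  have "finite {j. adj i j}" using assms unfolding graph_def by blast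
  then show ?thesis using assms(2) unfolding deg_def by (auto simp: card_gt_0_iff)
qed

lemma graph_adjm_rw_eq_0_iff:
  assumes "graph V adj"
  shows "adjm_rw adj i k = 0 \<longleftrightarrow> \<not> adj i k"
  using graph_deg_pos[OF assms] unfolding adjm_rw_def adjm_def by fastforce

lemma graph_neighbours_same_deg_imp_biregular_or_regular:
  assumes G: "graph V adj"
    and nbr: "\<And>i k k'. adj i k \<Longrightarrow> adj i k' \<Longrightarrow> deg adj k = deg adj k'"
  shows "biregular V adj \<or> regular V adj"
proof (cases "V = {}")
  case True
  then show ?thesis unfolding regular_def by simp
next
  case False
  then obtain v where v: "v \<in> V" by blast
  have sym: "\<And>i j. adj i j \<Longrightarrow> adj j i" and inV: "\<And>i j. adj i j \<Longrightarrow> i \<in> V \<and> j \<in> V"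
    using G unfolding graph_def by blast+
  define d1 where "d1 = deg adj v"
  define d2 where "d2 = deg adj (SOME w. adj v w)"
  let ?P = "\<lambda>d d' j. deg adj j = d \<and> (\<forall>m. adj j m \<longrightarrow> deg adj m = d')"
  have alternate: "?P d1 d2 j \<or> ?P d2 d1 j" if "j \<in> V" for j
  proof -
    have "adj\<^sup>*\<^sup>* v j" using G v that unfolding graph_def by blast
    then show ?thesis
    proof (induction rule: rtranclp_induct)
      case base
      have "deg adj m = d2" if "adj v m" for m
        using nbr[OF that someI[of "adj v", OF that]] unfolding d2_def .
      then show ?case unfolding d1_def by blast
    next
      case (step y z)
      then show ?case using nbr sym by metis
    qed
  qed
  show ?thesis
  proof (cases "d1 = d2")
    case True
    then show ?thesis using alternate unfolding regular_def by metis
  next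
    case False
    let ?V1 = "{j \<in> V. deg adj j = d1}" and ?V2 = "{j \<in> V. deg adj j \<noteq> d1}"
    have edges: "\<forall>i j. adj i j \<longrightarrow> (i \<in> ?V1 \<and> j \<in> ?V2) \<or> (i \<in> ?V2 \<and> j \<in> ?V1)"
      using alternate inV False by fastforce
    have V2: "\<forall>i\<in>?V2. deg adj i = d2"
      using alternate by auto
    have "biregular V adj"
      unfolding biregular_def
    proof (rule exI[of _ ?V1], rule exI[of _ ?V2], intro conjI)
      show "\<forall>i\<in>?V2. \<forall>j\<in>?V2. deg adj i = deg adj j"
        using V2 by metis
    qed (use edges in auto)
    then show ?thesis ..
  qed
qed

locale rw_scaled_adjacency =
  fixes V :: "'a set" and adj :: "'a \<Rightarrow> 'a \<Rightarrow> bool" and \<pi> :: "'a \<Rightarrow> 'a" and \<alpha> :: "'a \<Rightarrow> real"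
  assumes graph: "graph V adj"
    and perm: "bij_betw \<pi> V V"
    and nonzero: "\<forall>i\<in>V. \<alpha> i \<noteq> 0"
    and scaling: "\<And>i k. i \<in> V \<Longrightarrow> k \<in> V
      \<Longrightarrow> adjm adj i k * \<alpha> k = \<alpha> i * \<alpha> i * adjm_rw adj (\<pi> i) (\<pi> k)"
begin

lemma adj_in_V: "adj i k \<Longrightarrow> i \<in> V \<and> k \<in> V"
  using graph unfolding graph_def by blast

lemma adj_perm_iff:
  assumes "i \<in> V" "k \<in> V"
  shows "adj (\<pi> i) (\<pi> k) \<longleftrightarrow> adj i k"
proof -
  have "adjm adj i k * \<alpha> k \<noteq> 0 \<longleftrightarrow> adj i k"
    using nonzero assms unfolding adjm_def by auto
  moreover have "\<alpha> i * \<alpha> i * adjm_rw adj (\<pi> i) (\<pi> k) \<noteq> 0 \<longleftrightarrow> adj (\<pi> i) (\<pi> k)"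
    using nonzero assms graph_adjm_rw_eq_0_iff[OF graph] by auto
  ultimately show ?thesis using scaling[OF assms] by simp
qed

lemma deg_perm:
  assumes i: "i \<in> V"
  shows "deg adj (\<pi> i) = deg adj i"
proof -
  have inj: "inj_on \<pi> {j. adj i j}"
    using perm adj_in_V unfolding bij_betw_def by (blast intro: inj_on_subset)
  have "\<pi> ` {j. adj i j} = {j. adj (\<pi> i) j}"
  proof
    show "\<pi> ` {j. adj i j} \<subseteq> {j. adj (\<pi> i) j}"
      using adj_perm_iff[OF i] adj_in_V by blast
    show "{j. adj (\<pi> i) j} \<subseteq> \<pi> ` {j. adj i j}"
    proof
      fix l assume l: "l \<in> {j. adj (\<pi> i) j}"
      then obtain k where "k \<in> V" "l = \<pi> k"
        using adj_in_V perm unfolding bij_betw_def by blast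
      then show "l \<in> \<pi> ` {j. adj i j}"
        using adj_perm_iff[OF i] l by blast
    qed
  qed
  then show ?thesis
    unfolding deg_def using card_image[OF inj] by simp
qed

lemma scaling_along_edge:
  assumes "adj i k"
  shows "\<alpha> k * real (deg adj i) = \<alpha> i * \<alpha> i"
proof -
  have "adj (\<pi> i) (\<pi> k)" using adj_perm_iff adj_in_V assms by blast
  then have "\<alpha> k = \<alpha> i * \<alpha> i / real (deg adj i)"
    using scaling[of i k] deg_perm adj_in_V assms unfolding adjm_rw_def adjm_def by simp
  then show ?thesis using graph_deg_pos[OF graph assms] by simp
qed

text \<open>Scaling along i-k and i-k' gives \<alpha> k = \<alpha> k'; scaling back along k-i and k'-i
  then gives deg k = deg k'.\<close>
lemma neighbours_same_deg:
  assumes "adj i k" "adj i k'"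
  shows "deg adj k = deg adj k'"
proof -
  have sym: "adj k i" "adj k' i" using graph assms unfolding graph_def by blast+
  have "\<alpha> k = \<alpha> k'"
    using scaling_along_edge[OF assms(1)] scaling_along_edge[OF assms(2)] graph_deg_pos[OF graph assms(1)]
    by (metis less_irrefl mult_right_cancel of_nat_0_eq_iff)
  moreover have "\<alpha> i \<noteq> 0" using nonzero adj_in_V assms(1) by blast
  ultimately have "real (deg adj k) = real (deg adj k')"
    using scaling_along_edge[OF sym(1)] scaling_along_edge[OF sym(2)] by (metis mult_left_cancel)
  then show ?thesis by simp
qed

end

theorem proposition2p11:
  fixes V :: "'a set" and adj :: "'a \<Rightarrow> 'a \<Rightarrow> bool"
    and f :: "('a \<Rightarrow> real) \<Rightarrow> ('a \<Rightarrow> real)"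
    and \<alpha> :: "'a \<Rightarrow> real" and \<pi> :: "'a \<Rightarrow> 'a"
  assumes "graph V adj"
    and "bij_betw \<pi> V V"
    and "\<forall>i\<in>V. \<alpha> i \<noteq> 0"
    and "evo_iso V (adjm adj) (adjm_rw adj) f"
    and "\<forall>i\<in>V. f (basis_vec i) = (\<lambda>k. \<alpha> i * basis_vec (\<pi> i) k)"
  shows "biregular V adj \<or> regular V adj"
proof -
  have "rw_scaled_adjacency V adj \<pi> \<alpha>"
  proof
    show "adjm adj i k * \<alpha> k = \<alpha> i * \<alpha> i * adjm_rw adj (\<pi> i) (\<pi> k)"
      if "i \<in> V" "k \<in> V" for i k
      using evo_iso_permuted_basis_structure_constants[OF assms(4) _ assms(5) that
          graph_adjm_row_in_vecs[OF assms(1)]] assms(2)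
      by (simp add: bij_betw_def)
  qed (use assms(1-3) in auto)
  then show ?thesis
    by (rule graph_neighbours_same_deg_imp_biregular_or_regular[OF assms(1)
          rw_scaled_adjacency.neighbours_same_deg])
qed

end
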